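(* Let $\alpha\in\mathbb{C}$ with $|\alpha|<\frac{1}{10}$, and let $\eta:=(1-|\mathrm{Re}(\alpha)|)/3$. Let $g:[0,2]\to\mathbb{R}$ be the continuous piecewise affine map with $g=0$ on $[0,\eta]$, $g=1$ on $[2\eta,2-2\eta]$, $g=0$ on $[2-\eta,2]$, and affine on $[\eta,2\eta]$ and on $[2-2\eta,2-\eta]$; still denote by $g$ its $2$-periodic extension to $\mathbb{R}$. Define $$\psi^{+}(c):=c+\alpha\, g(\mathrm{Re}(c)),\qquad \psi^{-}(c):=c-\alpha+\alpha\, g\big(1+\mathrm{Re}(c-\alpha)\big),\qquad c\in\mathbb{C}.$$ Then $\psi^+,\psi^-$ are homeomorphisms of $\mathbb{C}$ satisfying $$\psi^{+}(c+1-\alpha)=\psi^{-}(c)+1,\quad \psi^{-}(c+1+\alpha)=\psi^{+}(c)+1\quad(\forall c\in\mathbb{C}),\qquad \psi^{+}(0)=\psi^{-}(0)=0,\qquad \lim_{c\to0}\frac{\psi^{\pm}(c)}{c}=\lim_{c\to\infty}\frac{\psi^{\pm}(c)}{c}=1 .$$ Moreover, for all $c\in\mathbb{C}\setminus\{0\}$, $$\left|\frac{\psi^{\pm}(c)}{c}-1\right|<\min\left(\frac{1}{6},\frac{1}{10\,|\mathrm{Re}(c)|}\right)$$ (with $\frac{1}{10|\mathrm{Re}(c)|}:=+\infty$ when $\mathrm{Re}(c)=0$). *)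

theory Defs
  imports "HOL-Analysis.Analysis"
begin

definition eta :: "complex \<Rightarrow> real" where
  "eta \<alpha> = (1 - \<bar>Re \<alpha>\<bar>) / 3"

definition g0 :: "real \<Rightarrow> real \<Rightarrow> real" where
  "g0 e x = (if x \<le> e then 0
             else if x \<le> 2 * e then (x - e) / e
             else if x \<le> 2 - 2 * e then 1
             else if x \<le> 2 - e then (2 - e - x) / e
             else 0)"

definition g :: "real \<Rightarrow> real \<Rightarrow> real" where
  "g e x = g0 e (x - 2 * of_int \<lfloor>x / 2\<rfloor>)"

definition psi_plus :: "complex \<Rightarrow> complex \<Rightarrow> complex" where
  "psi_plus \<alpha> c = c + \<alpha> * complex_of_real (g (eta \<alpha>) (Re c))"

definition psi_minus :: "complex \<Rightarrow> complex \<Rightarrow> complex" where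
  "psi_minus \<alpha> c = c - \<alpha> + \<alpha> * complex_of_real (g (eta \<alpha>) (1 + Re (c - \<alpha>)))"

end

theory Submission imports Defs begin

text \<open>
  Both maps are shears \<open>c \<mapsto> c + \<alpha> f(Re c)\<close> with a profile \<open>f\<close> bounded by 1 and
  \<open>1/\<eta>\<close>-Lipschitz: for \<open>\<psi>\<^sup>+\<close> the profile is \<open>g\<close>, for \<open>\<psi>\<^sup>-\<close> it is \<open>g(1 + x - Re \<alpha>) - 1\<close>.
  As \<open>|Re \<alpha>| < \<eta>\<close>, the real part \<open>x + Re \<alpha> f(x)\<close> is a bijective perturbation of the
  identity, so the shear is a continuous bijection of the plane, hence a homeomorphism by
  invariance of domain. Both profiles vanish on \<open>[-\<eta>, \<eta>]\<close> and are dominated by the ramp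
  \<open>(|x| - \<eta>)/\<eta>\<close>, so \<open>\<psi>\<^sup>\<plusminus>(c) = c\<close> near 0, and \<open>|\<psi>\<^sup>\<plusminus>(c)/c - 1| = |\<alpha>| |f(Re c)|/|c|\<close> is at
  most \<open>|\<alpha>|/(2\<eta>) < 1/6\<close> and at most \<open>|\<alpha>|/|Re c|\<close>. The functional equations are the
  2-periodicity of \<open>g\<close>.
\<close>

definition dist_even :: "real \<Rightarrow> real" where
  "dist_even x = min (x - 2 * of_int \<lfloor>x/2\<rfloor>) (2 - (x - 2 * of_int \<lfloor>x/2\<rfloor>))"

lemma floor_half_bounds:
  fixes x :: real
  shows "2 * of_int \<lfloor>x/2\<rfloor> \<le> x" and "x < 2 * of_int \<lfloor>x/2\<rfloor> + 2"
  using floor_correct[of "x/2"] by linarith+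

lemma dist_even_le: "dist_even x \<le> \<bar>x - 2 * of_int m\<bar>"
proof (cases "m \<le> \<lfloor>x/2\<rfloor>")
  case True
  hence "real_of_int m \<le> of_int \<lfloor>x/2\<rfloor>" by simp
  thus ?thesis using floor_half_bounds[of x] unfolding dist_even_def by linarith
next
  case False
  hence "real_of_int m \<ge> of_int \<lfloor>x/2\<rfloor> + 1" by linarith
  thus ?thesis using floor_half_bounds[of x] unfolding dist_even_def by linarith
qed

lemma dist_even_attained: "\<exists>m. dist_even x = \<bar>x - 2 * of_int m\<bar>"
proof (cases "x - 2 * of_int \<lfloor>x/2\<rfloor> \<le> 1")
  case True
  thus ?thesis using floor_half_bounds[of x] unfolding dist_even_def
    by (intro exI[of _ "\<lfloor>x/2\<rfloor>"]) auto
next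
  case False
  thus ?thesis using floor_half_bounds[of x] unfolding dist_even_def
    by (intro exI[of _ "\<lfloor>x/2\<rfloor> + 1"]) auto
qed

lemma dist_even_le_dist_add: "dist_even x \<le> \<bar>x - y\<bar> + dist_even y"
proof -
  obtain m where "dist_even y = \<bar>y - 2 * of_int m\<bar>" using dist_even_attained by blast
  thus ?thesis using dist_even_le[of x m] by linarith
qed

lemma dist_even_one_minus:
  assumes "\<bar>a\<bar> \<le> 1"
  shows "dist_even (1 - a) = 1 - \<bar>a\<bar>"
proof -
  obtain m where m: "dist_even (1 - a) = \<bar>1 - a - 2 * of_int m\<bar>"
    using dist_even_attained by blast
  have "\<bar>1 - a - 2 * of_int m\<bar> \<ge> 1 - \<bar>a\<bar>"
  proof (cases "m \<le> 0")
    case True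
    hence "real_of_int m \<le> 0" by simp
    thus ?thesis using assms by linarith
  next
    case False
    hence "real_of_int m \<ge> 1" by linarith
    thus ?thesis using assms by linarith
  qed
  thus ?thesis using m dist_even_le[of "1 - a" 0] dist_even_le[of "1 - a" 1] assms by simp
qed

lemma g_eq_clamp:
  assumes "0 < e" "e \<le> 1/2"
  shows "g e x = max 0 (min 1 ((dist_even x - e) / e))"
proof -
  define r where "r = x - 2 * of_int \<lfloor>x/2\<rfloor>"
  have r: "0 \<le> r" "r < 2"
    using floor_half_bounds[of x] unfolding r_def by linarith+
  have ramp: "(u - e) / e \<le> 0 \<longleftrightarrow> u \<le> e" "(u - e) / e \<ge> 1 \<longleftrightarrow> u \<ge> 2 * e" for u
    using assms by (auto simp: field_simps)
  have "g0 e r = max 0 (min 1 ((min r (2 - r) - e) / e))"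
    unfolding g0_def using r assms ramp[of r] ramp[of "2 - r"]
    by (auto simp: min_def max_def field_simps)
  thus ?thesis unfolding g_def dist_even_def r_def by simp
qed

lemma g_bounds:
  assumes "0 < e" "e \<le> 1/2"
  shows "0 \<le> g e x" and "g e x \<le> 1"
  unfolding g_eq_clamp[OF assms] by auto

lemma g_lipschitz:
  assumes "0 < e" "e \<le> 1/2"
  shows "\<bar>g e x - g e y\<bar> \<le> \<bar>x - y\<bar> / e"
proof -
  have "\<bar>g e x - g e y\<bar> \<le> \<bar>(dist_even x - e) / e - (dist_even y - e) / e\<bar>"
    unfolding g_eq_clamp[OF assms] by (auto simp: min_def max_def)
  also have "\<dots> = \<bar>dist_even x - dist_even y\<bar> / e"
    using assms by (simp add: field_simps)
  also have "\<dots> \<le> \<bar>x - y\<bar> / e"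
    using dist_even_le_dist_add[of x y] dist_even_le_dist_add[of y x] assms
    by (intro divide_right_mono) auto
  finally show ?thesis .
qed

lemma g_periodic: "g e (x + 2) = g e x"
proof -
  have "\<lfloor>(x + 2) / 2\<rfloor> = \<lfloor>x/2\<rfloor> + 1"
    by (metis add_divide_distrib div_self floor_add_int of_int_1 zero_neq_numeral)
  thus ?thesis unfolding g_def by simp
qed

lemma g_le_ramp:
  assumes "0 < e" "e \<le> 1/2"
  shows "g e x \<le> max 0 ((\<bar>x\<bar> - e) / e)"
proof -
  have "(dist_even x - e) / e \<le> (\<bar>x\<bar> - e) / e"
    using dist_even_le[of x 0] assms by (intro divide_right_mono) auto
  thus ?thesis unfolding g_eq_clamp[OF assms] by auto
qed

lemma one_minus_g_le_ramp:
  assumes "\<bar>a\<bar> \<le> 1" and e: "e = (1 - \<bar>a\<bar>) / 3" "0 < e"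
  shows "1 - g e (1 + x - a) \<le> max 0 ((\<bar>x\<bar> - e) / e)"
proof -
  have "dist_even (1 - a) \<le> \<bar>x\<bar> + dist_even (1 + x - a)"
    using dist_even_le_dist_add[of "1 - a" "1 + x - a"] by simp
  moreover have "3 * e = 1 - \<bar>a\<bar>" using e by simp
  ultimately have "dist_even (1 + x - a) \<ge> 3 * e - \<bar>x\<bar>"
    using dist_even_one_minus[OF assms(1)] by linarith
  hence "(dist_even (1 + x - a) - e) / e \<ge> (2 * e - \<bar>x\<bar>) / e"
    using e(2) by (intro divide_right_mono) auto
  moreover have "1 - (2 * e - \<bar>x\<bar>) / e = (\<bar>x\<bar> - e) / e"
    using e by (simp add: field_simps)
  moreover have "e \<le> 1/2" using e by simp
  ultimately show ?thesis using g_eq_clamp[OF e(2), of "1 + x - a"] by (auto simp: max_def min_def)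
qed

definition shear :: "complex \<Rightarrow> (real \<Rightarrow> real) \<Rightarrow> complex \<Rightarrow> complex" where
  "shear \<alpha> f c = c + \<alpha> * complex_of_real (f (Re c))"

lemma continuous_on_shear:
  assumes "continuous_on UNIV f"
  shows "continuous_on UNIV (shear \<alpha> f)"
  unfolding shear_def
  by (intro continuous_intros continuous_on_compose2[OF assms]) auto

lemma inj_shear:
  assumes lip: "L-lipschitz_on UNIV f" and small: "\<bar>Re \<alpha>\<bar> * L < 1"
  shows "inj (shear \<alpha> f)"
proof (rule injI)
  fix c d assume eq: "shear \<alpha> f c = shear \<alpha> f d"
  have "Re c + Re \<alpha> * f (Re c) = Re d + Re \<alpha> * f (Re d)"
    using arg_cong[OF eq, of Re] by (simp add: shear_def)
  hence "Re c - Re d = Re \<alpha> * (f (Re d) - f (Re c))" by (simp add: algebra_simps)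
  hence "\<bar>Re c - Re d\<bar> = \<bar>Re \<alpha>\<bar> * \<bar>f (Re d) - f (Re c)\<bar>" by (simp add: abs_mult)
  also have "\<dots> \<le> \<bar>Re \<alpha>\<bar> * (L * \<bar>Re c - Re d\<bar>)"
    using lipschitz_onD[OF lip, of "Re d" "Re c"]
    by (intro mult_left_mono) (auto simp: dist_real_def abs_minus_commute)
  finally have "(1 - \<bar>Re \<alpha>\<bar> * L) * \<bar>Re c - Re d\<bar> \<le> 0" by (simp add: algebra_simps)
  with small have "Re c = Re d" by (simp add: mult_le_0_iff)
  thus "c = d" using eq unfolding shear_def by simp
qed

text \<open>The real part \<open>x + Re \<alpha> f(x)\<close> stays within \<open>|Re \<alpha>| B\<close> of \<open>x\<close>, so the IVT solves for it.\<close>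

lemma surj_shear:
  assumes "continuous_on UNIV f" and bound: "\<And>x. \<bar>f x\<bar> \<le> B"
  shows "surj (shear \<alpha> f)"
proof -
  have "w \<in> range (shear \<alpha> f)" for w
  proof -
    define h where "h x = x + Re \<alpha> * f x" for x
    define r where "r = \<bar>Re \<alpha>\<bar> * B"
    have dev: "\<bar>h x - x\<bar> \<le> r" for x
      unfolding h_def r_def using bound[of x]
      by (simp add: abs_mult mult_left_mono)
    have "continuous_on {Re w - r .. Re w + r} h"
      unfolding h_def using continuous_on_subset[OF assms(1)] by (intro continuous_intros) auto
    moreover have "h (Re w - r) \<le> Re w" "Re w \<le> h (Re w + r)"
      using dev[of "Re w - r"] dev[of "Re w + r"] by linarith+
    moreover have "0 \<le> r" using dev[of 0] by linarith
    ultimately obtain x where x: "h x = Re w"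
      using IVT'[of h "Re w - r" "Re w" "Re w + r"] by auto
    have "shear \<alpha> f (Complex x (Im w - Im \<alpha> * f x)) = w"
      using x unfolding shear_def h_def by (intro complex_eqI) auto
    thus ?thesis by (metis rangeI)
  qed
  thus ?thesis by auto
qed

lemma shear_homeomorphism:
  assumes lip: "L-lipschitz_on UNIV f" and bound: "\<And>x. \<bar>f x\<bar> \<le> B"
    and small: "\<bar>Re \<alpha>\<bar> * L < 1"
  shows "\<exists>h. homeomorphism UNIV UNIV (shear \<alpha> f) h"
proof -
  have cont: "continuous_on UNIV (shear \<alpha> f)"
    using continuous_on_shear lipschitz_on_continuous_on[OF lip] by blast
  obtain h where "homeomorphism UNIV (range (shear \<alpha> f)) (shear \<alpha> f) h"
    using invariance_of_domain_homeomorphism[OF open_UNIV cont _ inj_shear[OF lip small]]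
    by auto
  thus ?thesis
    using surj_shear[OF lipschitz_on_continuous_on[OF lip] bound] by auto
qed

lemma shear_div_minus_one:
  assumes "c \<noteq> 0"
  shows "shear \<alpha> f c / c - 1 = \<alpha> * complex_of_real (f (Re c)) / c"
  using assms unfolding shear_def by (simp add: field_simps)

lemma norm_shear_div_minus_one:
  assumes "c \<noteq> 0"
  shows "norm (shear \<alpha> f c / c - 1) = norm \<alpha> * \<bar>f (Re c)\<bar> / norm c"
  unfolding shear_div_minus_one[OF assms] by (simp add: norm_mult norm_divide)

lemma ramp_bound_mult:
  fixes e x \<phi> :: real
  assumes "0 < e" "0 \<le> x" "\<phi> \<le> 1" "\<phi> \<le> max 0 ((x - e) / e)"
  shows "2 * e * \<phi> \<le> x"
proof (cases "\<phi> \<le> 0")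
  case True
  hence "2 * e * \<phi> \<le> 0" using assms(1) by (simp add: mult_nonneg_nonpos)
  thus ?thesis using assms(2) by linarith
next
  case False
  hence "e * \<phi> \<le> x - e"
    using assms(1,4) by (auto simp: field_simps max_def split: if_splits)
  moreover have "e * \<phi> \<le> e" using assms(1,3) by simp
  ultimately show ?thesis by linarith
qed

lemma shear_ratio_bounds:
  assumes \<alpha>: "norm \<alpha> < 1/10" and e: "3/10 < e"
    and bound: "\<And>x. \<bar>f x\<bar> \<le> 1" and ramp: "\<And>x. \<bar>f x\<bar> \<le> max 0 ((\<bar>x\<bar> - e) / e)"
    and c: "c \<noteq> 0"
  shows "norm (shear \<alpha> f c / c - 1) < 1/6"
    and "Re c \<noteq> 0 \<Longrightarrow> norm (shear \<alpha> f c / c - 1) < 1 / (10 * \<bar>Re c\<bar>)"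
proof -
  define \<phi> where "\<phi> = \<bar>f (Re c)\<bar>"
  have n: "0 < norm c" "\<bar>Re c\<bar> \<le> norm c" using c abs_Re_le_cmod by auto
  have err: "norm (shear \<alpha> f c / c - 1) = norm \<alpha> * \<phi> / norm c"
    unfolding \<phi>_def by (rule norm_shear_div_minus_one[OF c])
  have "2 * e * \<phi> \<le> norm c"
    using ramp_bound_mult[of e "\<bar>Re c\<bar>" \<phi>] bound ramp e n unfolding \<phi>_def by force
  hence "\<phi> \<le> norm c / (2 * e)" using e by (simp add: field_simps)
  hence "norm \<alpha> * \<phi> \<le> norm \<alpha> * (norm c / (2 * e))"
    by (intro mult_left_mono) auto
  also have "\<dots> < norm c / 6"
    using \<alpha> e n by (simp add: field_simps)
  finally show "norm (shear \<alpha> f c / c - 1) < 1/6"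
    unfolding err using n by (simp add: field_simps)
  assume "Re c \<noteq> 0"
  have "norm \<alpha> * \<phi> * (10 * \<bar>Re c\<bar>) \<le> norm \<alpha> * (10 * norm c)"
    using bound[of "Re c"] n unfolding \<phi>_def
    by (intro mult_mono) (auto simp: mult_left_le)
  also have "\<dots> < norm c" using \<alpha> n by simp
  finally show "norm (shear \<alpha> f c / c - 1) < 1 / (10 * \<bar>Re c\<bar>)"
    unfolding err using n \<open>Re c \<noteq> 0\<close> by (simp add: field_simps)
qed

lemma shear_tendsto_at_0:
  assumes "0 < e" and vanish: "\<And>x. \<bar>x\<bar> < e \<Longrightarrow> f x = 0"
  shows "((\<lambda>c. shear \<alpha> f c / c) \<longlongrightarrow> 1) (at 0)"
proof (rule tendsto_eventually)
  have "eventually (\<lambda>c. c \<noteq> 0 \<and> norm c < e) (at (0::complex))"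
    using assms(1) unfolding eventually_at by (intro exI[of _ e]) (auto simp: dist_norm)
  thus "eventually (\<lambda>c. shear \<alpha> f c / c = 1) (at 0)"
  proof (rule eventually_mono)
    fix c :: complex assume c: "c \<noteq> 0 \<and> norm c < e"
    hence "f (Re c) = 0" using abs_Re_le_cmod[of c] vanish by force
    thus "shear \<alpha> f c / c = 1" using c by (simp add: shear_def)
  qed
qed

lemma shear_tendsto_at_infinity:
  assumes bound: "\<And>x. \<bar>f x\<bar> \<le> B"
  shows "((\<lambda>c. shear \<alpha> f c / c) \<longlongrightarrow> 1) at_infinity"
proof -
  have "((\<lambda>c. norm \<alpha> * B * norm (inverse c)) \<longlongrightarrow> 0) (at_infinity :: complex filter)"
    by (rule tendsto_mult_right_zero[OF tendsto_norm_zero[OF tendsto_inverse_0]])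
  moreover have "\<forall>\<^sub>F c in at_infinity. norm (shear \<alpha> f c / c - 1) \<le> norm \<alpha> * B * norm (inverse c)"
  proof (rule eventually_mono[OF eventually_at_infinity[THEN iffD2]])
    show "\<exists>b. \<forall>c::complex. b \<le> norm c \<longrightarrow> c \<noteq> 0" by (intro exI[of _ 1]) auto
    fix c :: complex assume "c \<noteq> 0"
    thus "norm (shear \<alpha> f c / c - 1) \<le> norm \<alpha> * B * norm (inverse c)"
      unfolding norm_shear_div_minus_one[OF \<open>c \<noteq> 0\<close>] using bound[of "Re c"]
      by (simp add: norm_inverse divide_inverse mult_left_mono mult_right_mono)
  qed
  ultimately have "((\<lambda>c. shear \<alpha> f c / c - 1) \<longlongrightarrow> 0) at_infinity"
    by (rule Lim_null_comparison[rotated])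
  from tendsto_add[OF this tendsto_const[of 1]] show ?thesis by simp
qed

lemma shear_properties:
  assumes \<alpha>: "norm \<alpha> < 1/10" and e: "3/10 < e" and lip: "(1/e)-lipschitz_on UNIV f"
    and bound: "\<And>x. \<bar>f x\<bar> \<le> 1" and ramp: "\<And>x. \<bar>f x\<bar> \<le> max 0 ((\<bar>x\<bar> - e) / e)"
  shows "(\<exists>h. homeomorphism UNIV UNIV (shear \<alpha> f) h) \<and> shear \<alpha> f 0 = 0
    \<and> ((\<lambda>c. shear \<alpha> f c / c) \<longlongrightarrow> 1) (at 0)
    \<and> ((\<lambda>c. shear \<alpha> f c / c) \<longlongrightarrow> 1) at_infinity
    \<and> (\<forall>c. c \<noteq> 0 \<longrightarrow> norm (shear \<alpha> f c / c - 1) < 1/6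
          \<and> (Re c \<noteq> 0 \<longrightarrow> norm (shear \<alpha> f c / c - 1) < 1 / (10 * \<bar>Re c\<bar>)))"
proof -
  have vanish: "f x = 0" if "\<bar>x\<bar> < e" for x
  proof -
    have "(\<bar>x\<bar> - e) / e < 0" using that e by (simp add: divide_less_0_iff)
    thus ?thesis using ramp[of x] by simp
  qed
  have "\<bar>Re \<alpha>\<bar> * (1/e) < 1"
    using abs_Re_le_cmod[of \<alpha>] \<alpha> e by (simp add: field_simps)
  hence "\<exists>h. homeomorphism UNIV UNIV (shear \<alpha> f) h"
    using shear_homeomorphism[OF lip bound] by blast
  moreover have "shear \<alpha> f 0 = 0" using vanish[of 0] e by (simp add: shear_def)
  moreover have "((\<lambda>c. shear \<alpha> f c / c) \<longlongrightarrow> 1) (at 0)"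
    using e by (intro shear_tendsto_at_0[of e f \<alpha>] vanish) auto
  ultimately show ?thesis
    using shear_tendsto_at_infinity[OF bound] shear_ratio_bounds[OF \<alpha> e bound ramp] by auto
qed

theorem mainTheorem3:
  fixes \<alpha> :: complex
  assumes "norm \<alpha> < 1 / 10"
  shows "(\<exists>h. homeomorphism UNIV UNIV (psi_plus \<alpha>) h)
    \<and> (\<exists>h. homeomorphism UNIV UNIV (psi_minus \<alpha>) h)
    \<and> (\<forall>c. psi_plus \<alpha> (c + 1 - \<alpha>) = psi_minus \<alpha> c + 1)
    \<and> (\<forall>c. psi_minus \<alpha> (c + 1 + \<alpha>) = psi_plus \<alpha> c + 1)
    \<and> psi_plus \<alpha> 0 = 0 \<and> psi_minus \<alpha> 0 = 0
    \<and> ((\<lambda>c. psi_plus \<alpha> c / c) \<longlongrightarrow> 1) (at 0)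
    \<and> ((\<lambda>c. psi_minus \<alpha> c / c) \<longlongrightarrow> 1) (at 0)
    \<and> ((\<lambda>c. psi_plus \<alpha> c / c) \<longlongrightarrow> 1) at_infinity
    \<and> ((\<lambda>c. psi_minus \<alpha> c / c) \<longlongrightarrow> 1) at_infinity
    \<and> (\<forall>c. c \<noteq> 0 \<longrightarrow>
          norm (psi_plus \<alpha> c / c - 1) < 1 / 6
        \<and> (Re c \<noteq> 0 \<longrightarrow> norm (psi_plus \<alpha> c / c - 1) < 1 / (10 * \<bar>Re c\<bar>))
        \<and> norm (psi_minus \<alpha> c / c - 1) < 1 / 6
        \<and> (Re c \<noteq> 0 \<longrightarrow> norm (psi_minus \<alpha> c / c - 1) < 1 / (10 * \<bar>Re c\<bar>)))"
proof -
  define e a where "e = eta \<alpha>" and "a = Re \<alpha>"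
  have a: "\<bar>a\<bar> \<le> 1" and e: "e = (1 - \<bar>a\<bar>) / 3" "3/10 < e" "e \<le> 1/2"
    using abs_Re_le_cmod[of \<alpha>] assms unfolding e_def a_def eta_def by auto
  hence e0: "0 < e" by simp
  have plus: "psi_plus \<alpha> = shear \<alpha> (g e)"
    unfolding psi_plus_def shear_def e_def ..
  have minus: "psi_minus \<alpha> = shear \<alpha> (\<lambda>x. g e (1 + x - a) - 1)"
    unfolding psi_minus_def shear_def e_def a_def by (auto simp: algebra_simps)
  have "(\<forall>c. psi_plus \<alpha> (c + 1 - \<alpha>) = psi_minus \<alpha> c + 1)
      \<and> (\<forall>c. psi_minus \<alpha> (c + 1 + \<alpha>) = psi_plus \<alpha> c + 1)"
    unfolding plus minus shear_def a_def
    by (simp add: algebra_simps g_periodic)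
  moreover have "(1/e)-lipschitz_on UNIV (g e)"
    using g_lipschitz[OF e0 e(3)] e0 by (intro lipschitz_onI) (auto simp: dist_real_def)
  moreover have "(1/e)-lipschitz_on UNIV (\<lambda>x. g e (1 + x - a) - 1)"
  proof (rule lipschitz_onI)
    show "dist (g e (1 + x - a) - 1) (g e (1 + y - a) - 1) \<le> 1/e * dist x y" for x y
      using g_lipschitz[OF e0 e(3), of "1 + x - a" "1 + y - a"] by (simp add: dist_real_def)
  qed (use e0 in simp)
  ultimately show ?thesis
    using shear_properties[OF assms e(2), of "g e"]
      shear_properties[OF assms e(2), of "\<lambda>x. g e (1 + x - a) - 1"]
      g_bounds[OF e0 e(3)] g_le_ramp[OF e0 e(3)] one_minus_g_le_ramp[OF a e(1) e0]
    unfolding plus minus by auto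
qed

end
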